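(* Under the setting described in the context (conditions (V), (S), (C), compactly supported initial measure $\mu_0$, lattice approximate solution $\mu^N_t$), there is a compact set $K_V\subseteq\mathbb{R}^d\times\mathbb{R}^d$, independent of $l$ and $N$, such that $\operatorname{supp}V[\mu^N_{t_l}]\subseteq K_V$ for all $l$ and all (sufficiently large) $N$.
   Context: $\mathcal{M}^+(\mathbb{R}^k)$: finite nonnegative Borel measures; $\|f\|_{BL}=\max(\sup|f|,\operatorname{Lip}f)$, $\|\mu\|_{BL^*}=\sup\{\int\psi\,d\mu:\|\psi\|_{BL}\le1\}$. Conditions: (V) $V:\mathcal{M}^+(\mathbb{R}^d)\to\mathcal{M}^+(\mathbb{R}^d\times\mathbb{R}^d)$, $\pi_1^{\#}V[\mu]=\mu$; (V1) $\sup_{(x,v)\in\operatorname{supp}V[\mu]}|v|\le C_S(1+\sup_{(x,v)\in\operatorname{supp}V[\mu]}|x|)$; (V2) for each $R'>0$, $\|V[\mu]-V[\nu]\|_{BL^*}\le C_F(R')\|\mu-\nu\|_{BL^*}$ for $\mu,\nu$ supported in $B(0,R')$. (S) $s:\mathcal{M}^+(\mathbb{R}^d)\to\mathcal{M}^+(\mathbb{R}^d)$, (S1) $\|s[\mu]-s[\nu]\|_{BL^*}\le L\|\mu-\nu\|_{BL^*}$, (S2) $\operatorname{supp}s[\mu]\subseteq B(0,R)$ for all $\mu$. (C) $c:\mathbb{R}^d\times\mathcal{M}^+(\mathbb{R}^d)\to\mathbb{R}$, (C1) $|c|\le C_b$, (C2) $|c(x,\mu)-c(y,\nu)|\le C_L(|x-y|+\|\mu-\nu\|_{BL^*})$.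 Lattice scheme: fix $T>0$; $\Delta_N=1/N$; $x_1,\dots,x_I$ enumerate $(N^{-2}\mathbb{Z}^d)\cap[-N,N]^d$, $v_1,\dots,v_J$ enumerate $(N^{-1}\mathbb{Z}^d)\cap[-N,N]^d$; $Q_i=x_i+[0,\Delta_N^2)^d$, $Q'_j=v_j+[0,\Delta_N)^d$; $m_i^x(\mu)=\mu(Q_i)$, $m_{ij}^v(W)=W(Q_i\times Q'_j)$. Time points $t_l=l/N$, $l=0,\dots,M$, with the intervals $[t_l,t_{l+1})$ ($l<M$) and $[t_M,T]$ covering $[0,T]$, each of length at most $\Delta_N$. Set $\mu^N_0=\sum_i m_i^x(\mu_0)\delta_{x_i}$ and for $\tau\in[0,\Delta_N]$: $\mu^N_{t_l+\tau}=\tau\sum_i m_i^x(s[\mu^N_{t_l}])\delta_{x_i}+\sum_{i,j}m_{ij}^v(V[\mu^N_{t_l}])e^{c(x_i,\mu^N_{t_l})\tau}\delta_{x_i+\tau v_j}$. *)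

theory Defs
  imports "HOL-Analysis.Analysis"
begin

definition fin_borel :: "'a::topological_space measure \<Rightarrow> bool" where
  "fin_borel M \<longleftrightarrow> sets M = sets borel \<and> emeasure M (space M) < \<infinity>"

definition msupp :: "'a::metric_space measure \<Rightarrow> 'a set" where
  "msupp M = {x. \<forall>e>0. emeasure M (ball x e) > 0}"

definition BL1 :: "('a::metric_space \<Rightarrow> real) set" where
  "BL1 = {\<psi>. (\<forall>x. \<bar>\<psi> x\<bar> \<le> 1) \<and> (\<forall>x y. \<bar>\<psi> x - \<psi> y\<bar> \<le> dist x y)}"

definition bl_dist :: "'a::metric_space measure \<Rightarrow> 'a measure \<Rightarrow> real" where
  "bl_dist M N = (SUP \<psi>\<in>BL1. (integral\<^sup>L M \<psi>) - (integral\<^sup>L N \<psi>))"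

definition dirac_sum :: "'i set \<Rightarrow> ('i \<Rightarrow> 'a::topological_space) \<Rightarrow> ('i \<Rightarrow> real) \<Rightarrow> 'a measure" where
  "dirac_sum I p w = measure_of UNIV (sets borel)
     (\<lambda>A. \<Sum>i\<in>I. ennreal (w i) * indicator A (p i))"

definition xgrid :: "nat \<Rightarrow> (real^'d) set" where
  "xgrid N = {x. \<forall>k. (\<exists>z::int. x$k = real_of_int z / (real N)^2) \<and> \<bar>x$k\<bar> \<le> real N}"

definition vgrid :: "nat \<Rightarrow> (real^'d) set" where
  "vgrid N = {v. \<forall>k. (\<exists>z::int. v$k = real_of_int z / real N) \<and> \<bar>v$k\<bar> \<le> real N}"

definition Qx :: "nat \<Rightarrow> real^'d \<Rightarrow> (real^'d) set" where
  "Qx N x = {y. \<forall>k. x$k \<le> y$k \<and> y$k < x$k + (1 / real N)^2}"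

definition Qv :: "nat \<Rightarrow> real^'d \<Rightarrow> (real^'d) set" where
  "Qv N v = {y. \<forall>k. v$k \<le> y$k \<and> y$k < v$k + 1 / real N}"

definition lattice_init :: "nat \<Rightarrow> (real^'d) measure \<Rightarrow> (real^'d) measure" where
  "lattice_init N \<mu>0 = dirac_sum (xgrid N) id (\<lambda>x. measure \<mu>0 (Qx N x))"

definition lattice_step ::
  "((real^'d) measure \<Rightarrow> ((real^'d) \<times> (real^'d)) measure) \<Rightarrow>
   ((real^'d) measure \<Rightarrow> (real^'d) measure) \<Rightarrow>
   (real^'d \<Rightarrow> (real^'d) measure \<Rightarrow> real) \<Rightarrow>
   nat \<Rightarrow> (real^'d) measure \<Rightarrow> real \<Rightarrow> (real^'d) measure" where
  "lattice_step V s c N \<mu> \<tau> =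
     dirac_sum (Inl ` xgrid N \<union> Inr ` (xgrid N \<times> vgrid N))
       (case_sum id (\<lambda>(x, v). x + \<tau> *\<^sub>R v))
       (case_sum (\<lambda>x. \<tau> * measure (s \<mu>) (Qx N x))
                 (\<lambda>(x, v). measure (V \<mu>) (Qx N x \<times> Qv N v) * exp (c x \<mu> * \<tau>)))"

text \<open>\<open>\<mu>^N_{t_l}\<close> with \<open>t_l = l/N\<close>; \<open>t_{l+1} = t_l + \<Delta>_N\<close>.\<close>
primrec lattice_sol ::
  "((real^'d) measure \<Rightarrow> ((real^'d) \<times> (real^'d)) measure) \<Rightarrow>
   ((real^'d) measure \<Rightarrow> (real^'d) measure) \<Rightarrow>
   (real^'d \<Rightarrow> (real^'d) measure \<Rightarrow> real) \<Rightarrow>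
   (real^'d) measure \<Rightarrow> nat \<Rightarrow> nat \<Rightarrow> (real^'d) measure" where
  "lattice_sol V s c \<mu>0 N 0 = lattice_init N \<mu>0"
| "lattice_sol V s c \<mu>0 N (Suc l) =
     lattice_step V s c N (lattice_sol V s c \<mu>0 N l) (1 / real N)"

end

theory Submission
  imports Defs
begin

text \<open>A lattice cell that carries mass lies within distance \<open>d/N\<close> of the support of the measure it
  samples. Hence one time step of length \<open>h = 1/N\<close> takes a spatial support radius \<open>r\<close> to at most
  \<open>(1 + |C_S| h) r + (|C_S| + 2d) h\<close>, by the velocity bound (V1), while the source term stays
  within radius \<open>|R| + d\<close>. Iterating over the \<open>l \<le> T N\<close> steps bounds the radius by
  \<open>(max r\<^sub>0 |R| + d + (|C_S| + 2d) T) e\<^bsup>|C_S| T\<^esup>\<close>, uniformly in \<open>N\<close>, and (V1) then bounds the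
  velocities in the support of \<open>V[\<mu>\<^sup>N\<^sub>t\<^sub>l]\<close>. Only (V), (V1), (S) and (S2) are needed: the
  factor \<open>e\<^bsup>c \<tau>\<^esup>\<close> rescales masses but never creates them.\<close>

lemma emeasure_dirac_sum:
  assumes "A \<in> sets borel"
  shows "emeasure (dirac_sum I p w) A = (\<Sum>i\<in>I. ennreal (w i) * indicator A (p i))"
  unfolding dirac_sum_def
proof (rule emeasure_measure_of_sigma[OF _ _ _ assms])
  show "sigma_algebra UNIV (sets borel)"
    by (metis sets.sigma_algebra_axioms space_borel)
  show "positive (sets borel) (\<lambda>A. \<Sum>i\<in>I. ennreal (w i) * indicator A (p i))"
    by (simp add: positive_def)
  show "countably_additive (sets borel) (\<lambda>A. \<Sum>i\<in>I. ennreal (w i) * indicator A (p i))"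
    unfolding countably_additive_def
  proof (intro allI impI)
    fix F :: "nat \<Rightarrow> 'a set"
    assume "range F \<subseteq> sets borel" "disjoint_family F"
    have "(\<Sum>n. \<Sum>i\<in>I. ennreal (w i) * indicator (F n) (p i))
        = (\<Sum>i\<in>I. \<Sum>n. ennreal (w i) * indicator (F n) (p i))"
      by (intro suminf_sum summableI)
    also have "\<dots> = (\<Sum>i\<in>I. ennreal (w i) * indicator (\<Union>n. F n) (p i))"
      using \<open>disjoint_family F\<close> by (simp add: suminf_indicator)
    finally show "(\<Sum>n. \<Sum>i\<in>I. ennreal (w i) * indicator (F n) (p i))
        = (\<Sum>i\<in>I. ennreal (w i) * indicator (\<Union>n. F n) (p i))" .
  qed
qed

lemma fin_borel_dirac_sum: "fin_borel (dirac_sum I p w)"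
proof -
  have sets_eq: "sets (dirac_sum I p w) = sets borel"
    unfolding dirac_sum_def using sets.sigma_sets_eq[of borel] by (simp add: sets_measure_of_conv)
  then have "space (dirac_sum I p w) = UNIV"
    by (metis sets_eq_imp_space_eq space_borel)
  moreover have "emeasure (dirac_sum I p w) UNIV = (\<Sum>i\<in>I. ennreal (w i) * indicator UNIV (p i))"
    by (rule emeasure_dirac_sum) simp
  moreover have "(\<Sum>i\<in>I. ennreal (w i) * indicator UNIV (p i)) < \<infinity>"
    by (induction I rule: infinite_finite_induct) (auto simp: less_top)
  ultimately show ?thesis
    unfolding fin_borel_def using sets_eq by simp
qed

lemma msupp_dirac_sum_subset_cball:
  fixes p :: "'i \<Rightarrow> 'a::real_normed_vector"
  assumes "\<And>i. i \<in> I \<Longrightarrow> w i > 0 \<Longrightarrow> norm (p i) \<le> B"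
  shows "msupp (dirac_sum I p w) \<subseteq> cball 0 B"
proof
  fix y assume y: "y \<in> msupp (dirac_sum I p w)"
  show "y \<in> cball 0 B"
  proof (rule ccontr)
    assume "y \<notin> cball 0 B"
    then have e: "norm y - B > 0" by simp
    let ?U = "ball y (norm y - B)"
    have "emeasure (dirac_sum I p w) ?U = (\<Sum>i\<in>I. ennreal (w i) * indicator ?U (p i))"
      by (rule emeasure_dirac_sum) simp
    also have "\<dots> = 0"
    proof (intro sum.neutral ballI)
      fix i assume i: "i \<in> I"
      show "ennreal (w i) * indicator ?U (p i) = 0"
      proof (cases "w i > 0")
        case True
        then have "norm (p i) \<le> B" using assms i by auto
        then have "p i \<notin> ?U"
          using norm_triangle_ineq2[of y "p i"] by (auto simp: dist_norm norm_minus_commute)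
        then show ?thesis by simp
      qed (simp add: ennreal_eq_0_iff)
    qed
    moreover have "emeasure (dirac_sum I p w) ?U > 0"
      using y e unfolding msupp_def by blast
    ultimately show False by simp
  qed
qed

lemma msupp_meets_compact:
  fixes M :: "'a::metric_space measure"
  assumes sets_M: "sets M = sets borel" and pos: "measure M A > 0"
    and "A \<subseteq> K" and K: "compact K"
  shows "K \<inter> msupp M \<noteq> {}"
proof
  assume "K \<inter> msupp M = {}"
  have "\<forall>y\<in>K. \<exists>e>0. emeasure M (ball y e) = 0"
  proof
    fix y assume "y \<in> K"
    with \<open>K \<inter> msupp M = {}\<close> have "y \<notin> msupp M" by blast
    then show "\<exists>e>0. emeasure M (ball y e) = 0"
      unfolding msupp_def by (auto simp: not_less)
  qed
  then obtain e where e: "\<And>y. y \<in> K \<Longrightarrow> e y > 0 \<and> emeasure M (ball y (e y)) = 0"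
    by metis
  have "K \<subseteq> (\<Union>y\<in>K. ball y (e y))" using e by force
  then obtain F where F: "F \<subseteq> K" "finite F" "K \<subseteq> (\<Union>y\<in>F. ball y (e y))"
    using compactE_image[OF K, of K "\<lambda>y. ball y (e y)"] by auto
  have "emeasure M A \<le> emeasure M (\<Union>y\<in>F. ball y (e y))"
    using \<open>A \<subseteq> K\<close> F(3) sets_M by (intro emeasure_mono) (auto intro!: borel_open)
  also have "\<dots> \<le> (\<Sum>y\<in>F. emeasure M (ball y (e y)))"
    using F(2) sets_M by (intro emeasure_subadditive_finite) (auto intro!: borel_open)
  also have "\<dots> = 0" using F(1) e by (intro sum.neutral) auto
  finally have "emeasure M A = 0" by simp
  then show False using pos by (simp add: measure_def)
qed

lemma norm_le_if_charged_cell: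
  fixes M :: "'a::euclidean_space measure"
  assumes "sets M = sets borel" "measure M A > 0" "A \<subseteq> cball x \<delta>" "msupp M \<subseteq> cball 0 r"
  shows "norm x \<le> r + \<delta>"
proof -
  obtain y where "y \<in> cball x \<delta>" "y \<in> msupp M"
    using msupp_meets_compact[OF assms(1,2,3) compact_cball[of x \<delta>]] by blast
  then have "dist x y \<le> \<delta>" "norm y \<le> r"
    using assms(4) by auto
  then show ?thesis
    using norm_triangle_sub[of x y] by (simp add: dist_norm)
qed

lemma fst_msupp_subset_msupp_marginal:
  fixes W :: "('a::metric_space \<times> 'b::metric_space) measure"
  assumes sets_W: "sets W = sets borel" and marginal: "distr W borel fst = \<mu>"
  shows "fst ` msupp W \<subseteq> msupp \<mu>"
proof (clarsimp simp: msupp_def)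
  fix x v and e :: real
  assume p: "\<forall>e>0. 0 < emeasure W (ball (x, v) e)" and e: "e > 0"
  have fst_meas: "fst \<in> measurable W borel"
    using measurable_cong_sets[OF sets_W refl]
      borel_measurable_continuous_onI[OF continuous_on_fst[OF continuous_on_id]] by auto
  have "emeasure W (ball (x, v) e) \<le> emeasure W (fst -` ball x e \<inter> space W)"
  proof (rule emeasure_mono)
    show "ball (x, v) e \<subseteq> fst -` ball x e \<inter> space W"
    proof
      fix q assume "q \<in> ball (x, v) e"
      then have "dist x (fst q) < e" using dist_fst_le[of "(x, v)" q] by simp
      then show "q \<in> fst -` ball x e \<inter> space W"
        using sets_eq_imp_space_eq[OF sets_W] by simp
    qed
  qed (use fst_meas in \<open>simp add: measurable_sets\<close>)
  also have "\<dots> = emeasure \<mu> (ball x e)"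
    using marginal emeasure_distr[OF fst_meas, of "ball x e"] by auto
  finally show "0 < emeasure \<mu> (ball x e)"
    using p e by (auto intro: less_le_trans)
qed

lemma half_open_box_subset_cball:
  fixes x :: "real^'n"
  shows "{y. \<forall>k. x$k \<le> y$k \<and> y$k < x$k + \<delta>} \<subseteq> cball x (real CARD('n) * \<delta>)"
proof
  fix y assume y: "y \<in> {y. \<forall>k. x$k \<le> y$k \<and> y$k < x$k + \<delta>}"
  have "norm (y - x) \<le> (\<Sum>k\<in>UNIV. \<bar>(y - x)$k\<bar>)" by (rule norm_le_l1_cart)
  also have "\<dots> \<le> (\<Sum>k\<in>(UNIV::'n set). \<delta>)"
  proof (rule sum_mono)
    fix k
    have "x$k \<le> y$k" "y$k < x$k + \<delta>" using y by auto
    then show "\<bar>(y - x)$k\<bar> \<le> \<delta>" by simp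
  qed
  finally show "y \<in> cball x (real CARD('n) * \<delta>)"
    by (simp add: dist_norm norm_minus_commute)
qed

lemma Qx_subset_cball: "Qx N x \<subseteq> cball x (real CARD('d) * (1 / real N)^2)"
  for x :: "real^'d"
  unfolding Qx_def by (rule half_open_box_subset_cball)

lemma Qv_subset_cball: "Qv N v \<subseteq> cball v (real CARD('d) * (1 / real N))"
  for v :: "real^'d"
  unfolding Qv_def by (rule half_open_box_subset_cball)

lemma fin_borel_lattice_sol: "fin_borel (lattice_sol V s c \<mu>0 N l)"
  by (cases l) (simp_all add: lattice_init_def lattice_step_def fin_borel_dirac_sum)

lemma msupp_lattice_init_subset:
  fixes \<mu>0 :: "(real^'d) measure"
  assumes "N \<ge> 1" "fin_borel \<mu>0" "msupp \<mu>0 \<subseteq> cball 0 r"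
  shows "msupp (lattice_init N \<mu>0) \<subseteq> cball 0 (r + real CARD('d))"
  unfolding lattice_init_def
proof (rule msupp_dirac_sum_subset_cball)
  fix x :: "real^'d" assume "measure \<mu>0 (Qx N x) > 0"
  then have "norm x \<le> r + real CARD('d) * (1 / real N)^2"
    using assms(2,3)
    by (intro norm_le_if_charged_cell[OF _ _ Qx_subset_cball]) (auto simp: fin_borel_def)
  also have "\<dots> \<le> r + real CARD('d)"
    using assms(1) by (simp add: mult_left_le power_le_one)
  finally show "norm (id x) \<le> r + real CARD('d)" by simp
qed

lemma linear_growth_ge:
  fixes a b B :: real
  assumes "0 \<le> B" "0 \<le> b" "1 \<le> a"
  shows "B \<le> (B + b * real k) * a ^ k"
proof -
  have "0 \<le> B + b * real k" using assms by simp
  from mult_left_mono[OF one_le_power[OF assms(3)] this]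
  have "B + b * real k \<le> (B + b * real k) * a ^ k" by simp
  moreover have "0 \<le> b * real k" using assms by simp
  ultimately show ?thesis by linarith
qed

lemma linear_growth_step:
  fixes a b B :: real
  assumes "0 \<le> b" "1 \<le> a"
  shows "a * ((B + b * real k) * a ^ k) + b \<le> (B + b * real (Suc k)) * a ^ Suc k"
proof -
  have "b \<le> b * a ^ Suc k"
    using assms one_le_power[OF assms(2), of "Suc k"] by (simp add: mult_le_cancel_left1)
  then show ?thesis by (simp add: algebra_simps)
qed

lemma linear_growth_le_exp:
  fixes B \<beta> C h T :: real
  assumes "0 \<le> B" "0 \<le> \<beta>" "0 \<le> C" "0 \<le> h" "h * real l \<le> T"
  shows "(B + h * \<beta> * real l) * (1 + C * h) ^ l \<le> (B + \<beta> * T) * exp (C * T)"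
proof (rule mult_mono)
  show "B + h * \<beta> * real l \<le> B + \<beta> * T"
    using mult_left_mono[OF assms(5,2)] by (simp add: algebra_simps)
  have "(1 + C * h) ^ l \<le> exp (C * h) ^ l"
    using assms by (intro power_mono) auto
  also have "\<dots> = exp (C * (h * real l))"
    by (simp add: exp_of_nat_mult[symmetric] algebra_simps)
  also have "\<dots> \<le> exp (C * T)"
    using assms by (intro exp_mono mult_left_mono) auto
  finally show "(1 + C * h) ^ l \<le> exp (C * T)" .
  have "0 \<le> T"
    using assms(4,5) by (meson mult_nonneg_nonneg of_nat_0_le_iff order_trans)
  then show "0 \<le> B + \<beta> * T"
    using assms(1,2) by simp
qed (use assms in auto)

locale lattice_scheme =
  fixes V :: "(real^'d) measure \<Rightarrow> ((real^'d) \<times> (real^'d)) measure"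
    and s :: "(real^'d) measure \<Rightarrow> (real^'d) measure"
    and c :: "real^'d \<Rightarrow> (real^'d) measure \<Rightarrow> real"
    and C_S R :: real
  assumes V: "\<And>\<mu>. fin_borel \<mu> \<Longrightarrow> fin_borel (V \<mu>) \<and> distr (V \<mu>) borel fst = \<mu>"
    and V1: "\<And>\<mu> R0 x v. fin_borel \<mu> \<Longrightarrow>
               (\<forall>p\<in>msupp (V \<mu>). norm (fst p) \<le> R0) \<Longrightarrow>
               (x, v) \<in> msupp (V \<mu>) \<Longrightarrow> norm v \<le> C_S * (1 + R0)"
    and S: "\<And>\<mu>. fin_borel \<mu> \<Longrightarrow> fin_borel (s \<mu>)"
    and S2: "\<And>\<mu>. fin_borel \<mu> \<Longrightarrow> msupp (s \<mu>) \<subseteq> ball 0 R"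
begin

lemma msupp_V_subset:
  assumes "fin_borel \<mu>" "msupp \<mu> \<subseteq> cball 0 r" "0 \<le> 1 + r"
  shows "msupp (V \<mu>) \<subseteq> cball 0 r \<times> cball 0 (\<bar>C_S\<bar> * (1 + r))"
proof safe
  fix x v assume xv: "(x, v) \<in> msupp (V \<mu>)"
  have "fst ` msupp (V \<mu>) \<subseteq> msupp \<mu>"
    using V[OF assms(1)] by (intro fst_msupp_subset_msupp_marginal) (auto simp: fin_borel_def)
  then have fst_bound: "\<forall>p\<in>msupp (V \<mu>). norm (fst p) \<le> r"
    using assms(2) by fastforce
  then show "x \<in> cball 0 r" using xv by fastforce
  have "norm v \<le> C_S * (1 + r)" by (rule V1[OF assms(1) fst_bound xv])
  also have "\<dots> \<le> \<bar>C_S\<bar> * (1 + r)" using assms(3) by (intro mult_right_mono) auto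
  finally show "v \<in> cball 0 (\<bar>C_S\<bar> * (1 + r))" by simp
qed

lemma msupp_lattice_step_subset:
  assumes N: "N \<ge> 1" and \<mu>: "fin_borel \<mu>" "msupp \<mu> \<subseteq> cball 0 r" "0 \<le> r"
    and source: "\<bar>R\<bar> + real CARD('d) \<le> r'"
    and transport: "(1 + \<bar>C_S\<bar> * (1 / real N)) * r + 1 / real N * (\<bar>C_S\<bar> + 2 * real CARD('d)) \<le> r'"
  shows "msupp (lattice_step V s c N \<mu> (1 / real N)) \<subseteq> cball 0 r'"
proof -
  define h where "h = 1 / real N"
  define D where "D = real CARD('d)"
  have h: "0 < h" "h \<le> 1"
    using N by (auto simp: h_def)
  then have "h\<^sup>2 \<le> h"
    by (simp add: power2_eq_square mult_left_le)
  have D: "0 \<le> D" by (simp add: D_def)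
  have source_point: "norm x \<le> r'" if "measure (s \<mu>) (Qx N x) > 0" for x
  proof -
    have "norm x \<le> \<bar>R\<bar> + D * h\<^sup>2"
      using that S[OF \<mu>(1)] S2[OF \<mu>(1)] unfolding D_def h_def
      by (intro norm_le_if_charged_cell[OF _ _ Qx_subset_cball]) (auto simp: fin_borel_def)
    also have "\<dots> \<le> \<bar>R\<bar> + D"
      using h D by (simp add: mult_left_le power_le_one)
    finally show ?thesis
      using source by (simp add: D_def)
  qed
  have transported_point: "norm (x + h *\<^sub>R v) \<le> r'"
    if charged: "measure (V \<mu>) (Qx N x \<times> Qv N v) > 0" for x v
  proof -
    have cell: "Qx N x \<times> Qv N v \<subseteq> cball x (D * h\<^sup>2) \<times> cball v (D * h)"
      using Qx_subset_cball[of N x] Qv_subset_cball[of N v] unfolding D_def h_def by auto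
    have "sets (V \<mu>) = sets borel"
      using V[OF \<mu>(1)] by (simp add: fin_borel_def)
    from msupp_meets_compact[OF this charged cell compact_Times[OF compact_cball compact_cball]]
    obtain y w where
      near: "dist x y \<le> D * h\<^sup>2" "dist v w \<le> D * h" and "(y, w) \<in> msupp (V \<mu>)"
      by auto
    then have "norm y \<le> r" "norm w \<le> \<bar>C_S\<bar> * (1 + r)"
      using msupp_V_subset[OF \<mu>(1,2)] \<mu>(3) by auto
    then have x: "norm x \<le> r + D * h\<^sup>2" and v: "norm v \<le> \<bar>C_S\<bar> * (1 + r) + D * h"
      using near norm_triangle_sub[of x y] norm_triangle_sub[of v w] by (auto simp: dist_norm)
    have "norm (x + h *\<^sub>R v) \<le> norm x + h * norm v"
      using norm_triangle_ineq[of x "h *\<^sub>R v"] h by simp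
    also have "\<dots> \<le> (r + D * h\<^sup>2) + h * (\<bar>C_S\<bar> * (1 + r) + D * h)"
      using x v h by (intro add_mono mult_left_mono) auto
    also have "\<dots> \<le> (1 + \<bar>C_S\<bar> * h) * r + h * (\<bar>C_S\<bar> + 2 * D)"
      using mult_left_mono[OF \<open>h\<^sup>2 \<le> h\<close> D] by (simp add: algebra_simps power2_eq_square)
    also have "\<dots> \<le> r'"
      using transport by (simp add: h_def D_def)
    finally show ?thesis .
  qed
  show ?thesis
    unfolding lattice_step_def
  proof (rule msupp_dirac_sum_subset_cball)
    fix i :: "(real^'d) + (real^'d) \<times> (real^'d)"
    assume "case_sum (\<lambda>x. 1 / real N * measure (s \<mu>) (Qx N x))
      (\<lambda>(x, v). measure (V \<mu>) (Qx N x \<times> Qv N v) * exp (c x \<mu> * (1 / real N))) i > 0"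
    then show "norm (case_sum id (\<lambda>(x, v). x + (1 / real N) *\<^sub>R v) i) \<le> r'"
      using N source_point transported_point unfolding h_def
      by (auto split: sum.splits simp: zero_less_mult_iff zero_less_divide_iff)
  qed
qed

lemma msupp_lattice_sol_subset:
  fixes \<mu>0 :: "(real^'d) measure"
  assumes N: "N \<ge> 1" and \<mu>0: "fin_borel \<mu>0" "msupp \<mu>0 \<subseteq> cball 0 r0" "0 \<le> r0"
    and l: "real l \<le> T * real N"
  defines "B \<equiv> max (\<bar>R\<bar> + real CARD('d)) (r0 + real CARD('d))"
  shows "msupp (lattice_sol V s c \<mu>0 N l)
    \<subseteq> cball 0 ((B + (\<bar>C_S\<bar> + 2 * real CARD('d)) * T) * exp (\<bar>C_S\<bar> * T))"
proof -
  define h where "h = 1 / real N"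
  define a where "a = 1 + \<bar>C_S\<bar> * h"
  define \<beta> where "\<beta> = \<bar>C_S\<bar> + 2 * real CARD('d)"
  define U where "U k = (B + h * \<beta> * real k) * a ^ k" for k
  have h: "0 < h" "h * real l \<le> T"
    using N l by (auto simp: h_def field_simps)
  have B: "0 \<le> B" "\<bar>R\<bar> + real CARD('d) \<le> B" "r0 + real CARD('d) \<le> B"
    using \<mu>0(3) by (auto simp: B_def)
  have a: "1 \<le> a" and \<beta>: "0 \<le> \<beta>" and h\<beta>: "0 \<le> h * \<beta>"
    using h by (auto simp: a_def \<beta>_def)
  have "msupp (lattice_sol V s c \<mu>0 N k) \<subseteq> cball 0 (U k)" for k
  proof (induction k)
    case 0
    show ?case
      using msupp_lattice_init_subset[OF N \<mu>0(1,2)] B(3) by (auto simp: U_def)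
  next
    case (Suc k)
    have "0 \<le> U k"
      using linear_growth_ge[OF B(1) h\<beta> a, of k] B(1) unfolding U_def by linarith
    moreover have "\<bar>R\<bar> + real CARD('d) \<le> U (Suc k)"
      using linear_growth_ge[OF B(1) h\<beta> a, of "Suc k"] B(2) unfolding U_def by linarith
    moreover have "a * U k + h * \<beta> \<le> U (Suc k)"
      using linear_growth_step[OF h\<beta> a] unfolding U_def by simp
    ultimately have "msupp (lattice_step V s c N (lattice_sol V s c \<mu>0 N k) (1 / real N))
        \<subseteq> cball 0 (U (Suc k))"
      by (intro msupp_lattice_step_subset[OF N fin_borel_lattice_sol Suc.IH])
        (simp_all add: a_def h_def \<beta>_def)
    then show ?case by simp
  qed
  moreover have "U l \<le> (B + \<beta> * T) * exp (\<bar>C_S\<bar> * T)"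
    unfolding U_def a_def by (rule linear_growth_le_exp) (use B \<beta> h in auto)
  ultimately show ?thesis
    unfolding \<beta>_def by (meson dual_order.trans subset_cball)
qed

end

theorem corollary4p5:
  fixes V :: "(real^'d) measure \<Rightarrow> ((real^'d) \<times> (real^'d)) measure"
    and s :: "(real^'d) measure \<Rightarrow> (real^'d) measure"
    and c :: "real^'d \<Rightarrow> (real^'d) measure \<Rightarrow> real"
    and \<mu>0 :: "(real^'d) measure"
    and T C_S L R C_b C_L :: real
    and C_F :: "real \<Rightarrow> real"
  assumes T: "T > 0"
    and V: "\<And>\<mu>. fin_borel \<mu> \<Longrightarrow> fin_borel (V \<mu>) \<and> distr (V \<mu>) borel fst = \<mu>"
    and V1: "\<And>\<mu> R0 x v. fin_borel \<mu> \<Longrightarrow>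
               (\<forall>p\<in>msupp (V \<mu>). norm (fst p) \<le> R0) \<Longrightarrow>
               (x, v) \<in> msupp (V \<mu>) \<Longrightarrow> norm v \<le> C_S * (1 + R0)"
    and V2: "\<And>R' \<mu> \<nu>. R' > 0 \<Longrightarrow> fin_borel \<mu> \<Longrightarrow> fin_borel \<nu> \<Longrightarrow>
               msupp \<mu> \<subseteq> ball 0 R' \<Longrightarrow> msupp \<nu> \<subseteq> ball 0 R' \<Longrightarrow>
               bl_dist (V \<mu>) (V \<nu>) \<le> C_F R' * bl_dist \<mu> \<nu>"
    and S: "\<And>\<mu>. fin_borel \<mu> \<Longrightarrow> fin_borel (s \<mu>)"
    and S1: "\<And>\<mu> \<nu>. fin_borel \<mu> \<Longrightarrow> fin_borel \<nu> \<Longrightarrow>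
               bl_dist (s \<mu>) (s \<nu>) \<le> L * bl_dist \<mu> \<nu>"
    and S2: "\<And>\<mu>. fin_borel \<mu> \<Longrightarrow> msupp (s \<mu>) \<subseteq> ball 0 R"
    and C1: "\<And>x \<mu>. fin_borel \<mu> \<Longrightarrow> \<bar>c x \<mu>\<bar> \<le> C_b"
    and C2: "\<And>x y \<mu> \<nu>. fin_borel \<mu> \<Longrightarrow> fin_borel \<nu> \<Longrightarrow>
               \<bar>c x \<mu> - c y \<nu>\<bar> \<le> C_L * (dist x y + bl_dist \<mu> \<nu>)"
    and mu0: "fin_borel \<mu>0" "compact (msupp \<mu>0)"
  shows "\<exists>K_V. compact K_V \<and>
           (\<exists>N0. \<forall>N\<ge>N0. \<forall>l. real l \<le> T * real N \<longrightarrow>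
               msupp (V (lattice_sol V s c \<mu>0 N l)) \<subseteq> K_V)"
proof -
  interpret lattice_scheme V s c C_S R
    using V V1 S S2 by unfold_locales
  obtain r0 where r0: "msupp \<mu>0 \<subseteq> cball 0 r0" "0 \<le> r0"
    using compact_imp_bounded[OF mu0(2)] unfolding bounded_pos
    by (metis less_imp_le mem_cball_0 subsetI)
  define B where "B = max (\<bar>R\<bar> + real CARD('d)) (r0 + real CARD('d))"
  define Rm where "Rm = (B + (\<bar>C_S\<bar> + 2 * real CARD('d)) * T) * exp (\<bar>C_S\<bar> * T)"
  have "0 \<le> Rm"
    using r0(2) T by (simp add: Rm_def B_def)
  have "msupp (V (lattice_sol V s c \<mu>0 N l)) \<subseteq> cball 0 Rm \<times> cball 0 (\<bar>C_S\<bar> * (1 + Rm))"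
    if "N \<ge> 1" "real l \<le> T * real N" for N l
    using msupp_lattice_sol_subset[OF that(1) mu0(1) r0 that(2)] \<open>0 \<le> Rm\<close>
    by (intro msupp_V_subset fin_borel_lattice_sol) (simp_all add: Rm_def B_def)
  then show ?thesis
    by (intro exI[of _ "cball 0 Rm \<times> cball 0 (\<bar>C_S\<bar> * (1 + Rm))"] conjI compact_Times
        compact_cball) blast
qed

end
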